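(* Let $\eta_3=\int_1^\infty\frac{\mathrm{d}t}{\sqrt{t^6-1}}$ and let $\mathrm{cleafh}_3:(-\eta_3,\eta_3)\to\mathbb{R}$ be the hyperbolic leaf function of basis $3$. For every real $l$ with $2l\in(-\eta_3,\eta_3)$, writing $C=\mathrm{cleafh}_3(l)$, $$\mathrm{cleafh}_3(2l)=\frac{2C^2+2C^4-1}{\sqrt{1+8C^2+8C^6-8C^8}}.$$
   Context: For a natural number $n$, let $\eta_n=\int_1^\infty\frac{\mathrm{d}t}{\sqrt{t^{2n}-1}}$. The hyperbolic leaf function $\mathrm{cleafh}_n$ is the solution $r(l)$ on $(-\eta_n,\eta_n)$ of $\frac{\mathrm{d}^2r}{\mathrm{d}l^2}=n\,r^{2n-1}$ with $r(0)=1$, $r'(0)=0$; it is even, and for $l\ge0$ it is the inverse of $r\mapsto\int_1^r\frac{\mathrm{d}t}{\sqrt{t^{2n}-1}}$, $r\ge1$. *)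

theory Defs
  imports "HOL-Analysis.Analysis"
begin

definition leaf_integrand :: "nat \<Rightarrow> real \<Rightarrow> real" where
  "leaf_integrand n t = 1 / sqrt (t ^ (2 * n) - 1)"

definition eta :: "nat \<Rightarrow> real" where
  "eta n = integral {1..} (leaf_integrand n)"

definition cleafh :: "nat \<Rightarrow> real \<Rightarrow> real" where
  "cleafh n l = (THE r. 1 \<le> r \<and> integral {1..r} (leaf_integrand n) = \<bar>l\<bar>)"

end

theory Submission
  imports Defs
begin

(* With F r = integral of 1 / sqrt (t^6 - 1) over [1, r] and D = N / sqrt P the right-hand
   side of the formula, D' = W / (P * sqrt P) and the polynomial identity
   W^2 * (x^6 - 1) = 4 * (N^6 - P^3) give F'(D x) * D' x = 2 * F' x, so F (D c) = 2 * F c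
   as long as P stays positive on [1, c]. For r = cleafh 3 (2 * l) the intermediate value
   theorem yields c with D c = r; then F c = |l|, i.e. c = cleafh 3 l. *)

definition leaf_integral :: "nat \<Rightarrow> real \<Rightarrow> real" where
  "leaf_integral n r = integral {1..r} (leaf_integrand n)"

lemma leaf_integrand_nonneg: "1 \<le> t \<Longrightarrow> 0 \<le> leaf_integrand n t"
  by (simp add: leaf_integrand_def one_le_power)

lemma leaf_integrand_pos: "0 < n \<Longrightarrow> 1 < t \<Longrightarrow> 0 < leaf_integrand n t"
  by (simp add: leaf_integrand_def)

lemma isCont_leaf_integrand:
  assumes "0 < n" "1 < t"
  shows "isCont (leaf_integrand n) t"
proof -
  have "1 < t ^ (2 * n)"
    using assms by simp
  then show ?thesis
    unfolding leaf_integrand_def[abs_def] by (intro continuous_intros) auto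
qed

lemma tendsto_integral_atLeastAtMost_at_top:
  fixes f :: "real \<Rightarrow> real"
  assumes f: "f integrable_on {a..}" and nonneg: "\<And>x. a \<le> x \<Longrightarrow> 0 \<le> f x"
  shows "((\<lambda>b. integral {a..b} f) \<longlongrightarrow> integral {a..} f) at_top"
proof -
  have abs_int: "set_integrable lebesgue {a..} f"
    using nonnegative_absolutely_integrable_1[OF f] nonneg by (simp add: absolutely_integrable_on_def)
  have "((\<lambda>b. LINT x:{a..b}|lebesgue. f x) \<longlongrightarrow> (LINT x:{a..}|lebesgue. f x)) at_top"
    by (rule tendsto_set_lebesgue_integral_at_top[OF _ abs_int]) auto
  moreover have "set_integrable lebesgue {a..b} f" for b
    by (rule set_integrable_subset[OF abs_int]) auto
  ultimately show ?thesis
    by (simp add: set_lebesgue_integral_eq_integral(2) abs_int)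
qed

context
  fixes n :: nat
  assumes integrable: "leaf_integrand n integrable_on {1..}"
begin

lemma integrable_leaf_integrand_atLeastAtMost: "leaf_integrand n integrable_on {1..r}"
  by (rule integrable_on_subinterval[OF integrable]) auto

lemma continuous_on_leaf_integral: "continuous_on {1..b} (leaf_integral n)"
  unfolding leaf_integral_def[abs_def]
  by (rule indefinite_integral_continuous_1[OF integrable_leaf_integrand_atLeastAtMost])

lemma leaf_integral_has_derivative:
  assumes "0 < n" "1 < r"
  shows "(leaf_integral n has_real_derivative leaf_integrand n r) (at r)"
proof -
  have "(leaf_integral n has_vector_derivative leaf_integrand n r) (at r within {1..r+1})"
    unfolding leaf_integral_def[abs_def]
    by (rule integral_has_vector_derivative_continuous_at[where S = "{}", simplified])
       (use assms isCont_leaf_integrand in \<open>auto intro: continuous_at_imp_continuous_within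
         integrable_leaf_integrand_atLeastAtMost\<close>)
  moreover have "at r within {1..r+1} = at r"
    by (rule at_within_interior) (use assms in auto)
  ultimately show ?thesis
    by (simp add: has_real_derivative_iff_has_vector_derivative)
qed

lemma leaf_integral_strict_mono:
  assumes "0 < n" "1 \<le> a" "a < b"
  shows "leaf_integral n a < leaf_integral n b"
proof (rule DERIV_pos_imp_increasing_open[OF \<open>a < b\<close>])
  fix x assume "a < x" "x < b"
  then have "1 < x"
    using assms by simp
  then show "\<exists>y. (leaf_integral n has_real_derivative y) (at x) \<and> 0 < y"
    using leaf_integral_has_derivative leaf_integrand_pos \<open>0 < n\<close> by blast
next
  show "continuous_on {a..b} (leaf_integral n)"
    by (rule continuous_on_subset[OF continuous_on_leaf_integral]) (use assms in auto)
qed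

lemma leaf_integral_tendsto_eta: "(leaf_integral n \<longlongrightarrow> eta n) at_top"
  unfolding leaf_integral_def[abs_def] eta_def
  by (rule tendsto_integral_atLeastAtMost_at_top[OF integrable leaf_integrand_nonneg])

lemma leaf_integral_surj:
  assumes "0 \<le> y" "y < eta n"
  obtains r where "1 \<le> r" "leaf_integral n r = y"
proof -
  have "\<forall>\<^sub>F R in at_top. 1 \<le> R \<and> y < leaf_integral n R"
    using assms
    by (intro eventually_conj eventually_ge_at_top order_tendstoD(1)[OF leaf_integral_tendsto_eta])
  then obtain R where "1 \<le> R" "y < leaf_integral n R"
    using eventually_happens'[of "at_top :: real filter"] by auto
  moreover have "leaf_integral n 1 = 0"
    by (simp add: leaf_integral_def)
  ultimately obtain r where "1 \<le> r" "r \<le> R" "leaf_integral n r = y"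
    using IVT'[of "leaf_integral n" 1 y R] continuous_on_leaf_integral assms by auto
  then show ?thesis using that by blast
qed

lemma cleafh_eqI:
  assumes "0 < n" "1 \<le> r" "leaf_integral n r = \<bar>l\<bar>"
  shows "cleafh n l = r"
  unfolding cleafh_def
proof (rule the_equality)
  fix r' assume r': "1 \<le> r' \<and> integral {1..r'} (leaf_integrand n) = \<bar>l\<bar>"
  then show "r' = r"
    using leaf_integral_strict_mono[of r' r] leaf_integral_strict_mono[of r r'] assms
    unfolding leaf_integral_def by (cases r' r rule: linorder_cases) auto
qed (use assms in \<open>simp add: leaf_integral_def\<close>)

end

definition dup_numer :: "real \<Rightarrow> real" where
  "dup_numer x = 2 * x^2 + 2 * x^4 - 1"

definition dup_radicand :: "real \<Rightarrow> real" where
  "dup_radicand x = 1 + 8 * x^2 + 8 * x^6 - 8 * x^8"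

definition dup :: "real \<Rightarrow> real" where
  "dup x = dup_numer x / sqrt (dup_radicand x)"

definition dup_deriv_numer :: "real \<Rightarrow> real" where
  "dup_deriv_numer x = 12 * x + 24 * x^3 + 72 * x^5 - 48 * x^7 + 48 * x^9"

lemma dup_pow6_identity:
  "(dup_deriv_numer x)^2 * (x^6 - 1) = 4 * ((dup_numer x)^6 - (dup_radicand x)^3)"
  unfolding dup_deriv_numer_def dup_numer_def dup_radicand_def
  by (simp add: algebra_simps power_def eval_nat_numeral)

lemma dup_deriv_identity:
  "2 * (4 * x + 8 * x^3) * dup_radicand x - dup_numer x * (16 * x + 48 * x^5 - 64 * x^7)
     = 2 * dup_deriv_numer x"
  unfolding dup_deriv_numer_def dup_numer_def dup_radicand_def
  by (simp add: algebra_simps power_def eval_nat_numeral)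

lemma dup_one: "dup 1 = 1"
proof -
  have "sqrt 9 = (3::real)"
    by (rule real_sqrt_unique) auto
  then show ?thesis
    by (simp add: dup_def dup_numer_def dup_radicand_def)
qed

lemma dup_deriv_numer_pos:
  assumes "1 \<le> x"
  shows "0 < dup_deriv_numer x"
proof -
  have "0 < x" "0 < x^3" "0 < x^5" "x^7 \<le> x^9"
    using assms by (simp_all add: power_increasing)
  then show ?thesis
    unfolding dup_deriv_numer_def by linarith
qed

lemma has_real_derivative_dup_numer:
  "(dup_numer has_real_derivative 4 * x + 8 * x^3) (at x)"
  unfolding dup_numer_def[abs_def] by (auto intro!: derivative_eq_intros)

lemma has_real_derivative_dup_radicand:
  "(dup_radicand has_real_derivative 16 * x + 48 * x^5 - 64 * x^7) (at x)"
  unfolding dup_radicand_def[abs_def] by (auto intro!: derivative_eq_intros)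

lemma dup_radicand_strict_antimono:
  assumes "1 \<le> x" "x < y"
  shows "dup_radicand y < dup_radicand x"
proof (rule DERIV_neg_imp_decreasing_open[OF \<open>x < y\<close>])
  fix t assume "x < t" "t < y"
  then have "1 < t" using assms by simp
  then have "t < t^7" "t^5 < t^7"
    using power_strict_increasing[of 1 7 t] power_strict_increasing[of 5 7 t] by simp_all
  then show "\<exists>d. (dup_radicand has_real_derivative d) (at t) \<and> d < 0"
    using has_real_derivative_dup_radicand by force
qed (simp add: dup_radicand_def continuous_intros)

lemma has_real_derivative_dup:
  assumes P: "0 < dup_radicand x"
  shows "(dup has_real_derivative
           dup_deriv_numer x / (dup_radicand x * sqrt (dup_radicand x))) (at x)"
proof -
  define s where "s = sqrt (dup_radicand x)"
  have "0 < s" "s * s = dup_radicand x"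
    using P by (simp_all add: s_def)
  have "((\<lambda>x. sqrt (dup_radicand x)) has_real_derivative
      inverse s / 2 * (16 * x + 48 * x^5 - 64 * x^7)) (at x)"
    unfolding s_def by (rule DERIV_chain2[OF DERIV_real_sqrt[OF P] has_real_derivative_dup_radicand])
  then have "(dup has_real_derivative
      ((4 * x + 8 * x^3) * s - dup_numer x * (inverse s / 2 * (16 * x + 48 * x^5 - 64 * x^7)))
        / (s * s)) (at x)"
    unfolding dup_def[abs_def] s_def
    by (rule DERIV_divide[OF has_real_derivative_dup_numer]) (use P in simp)
  also have "((4 * x + 8 * x^3) * s - dup_numer x * (inverse s / 2 * (16 * x + 48 * x^5 - 64 * x^7)))
        / (s * s)
      = (2 * (4 * x + 8 * x^3) * (s * s) - dup_numer x * (16 * x + 48 * x^5 - 64 * x^7))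
        / (2 * (s * s) * s)"
    using \<open>0 < s\<close> by (simp add: field_simps)
  also have "\<dots> = dup_deriv_numer x / (dup_radicand x * s)"
    unfolding \<open>s * s = dup_radicand x\<close> dup_deriv_identity by simp
  finally show ?thesis
    unfolding s_def .
qed

lemma dup_pow6_minus_one:
  assumes P: "0 < dup_radicand x"
  shows "(dup x)^6 - 1 = (dup_deriv_numer x)^2 * (x^6 - 1) / (4 * (dup_radicand x)^3)"
proof -
  have "(sqrt (dup_radicand x))^6 = ((sqrt (dup_radicand x))^2)^3"
    by (simp flip: power_mult)
  also have "\<dots> = (dup_radicand x)^3"
    using P by simp
  finally have "(dup x)^6 = (dup_numer x)^6 / (dup_radicand x)^3"
    by (simp add: dup_def power_divide)
  then show ?thesis
    using P dup_pow6_identity[of x] by (simp add: field_simps)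
qed

lemma dup_gt_one:
  assumes "1 < x" "0 < dup_radicand x"
  shows "1 < dup x"
proof -
  have "1 \<le> x^2" "1 \<le> x^4"
    using assms(1) by (simp_all add: one_le_power)
  with assms(2) have "0 \<le> dup x"
    by (simp add: dup_def dup_numer_def)
  moreover have "0 < (dup_deriv_numer x)^2 * (x^6 - 1) / (4 * (dup_radicand x)^3)"
    using assms dup_deriv_numer_pos[of x] by simp
  then have "1 < (dup x)^6"
    using dup_pow6_minus_one[OF assms(2)] by simp
  ultimately show ?thesis
    by (meson linorder_not_le power_le_one)
qed

lemma dup_ge_one: "1 \<le> x \<Longrightarrow> 0 < dup_radicand x \<Longrightarrow> 1 \<le> dup x"
  using dup_gt_one[of x] dup_one by (cases "x = 1") auto

lemma leaf_integrand_dup: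
  assumes "1 < x" and P: "0 < dup_radicand x"
  shows "leaf_integrand 3 (dup x) * (dup_deriv_numer x / (dup_radicand x * sqrt (dup_radicand x)))
    = 2 * leaf_integrand 3 x"
proof -
  have W: "0 < dup_deriv_numer x"
    using \<open>1 < x\<close> by (simp add: dup_deriv_numer_pos)
  have "4 * (dup_radicand x)^3 = (2 * dup_radicand x)^2 * dup_radicand x"
    by algebra
  then have "sqrt ((dup x)^6 - 1)
      = dup_deriv_numer x * sqrt (x^6 - 1) / (2 * dup_radicand x * sqrt (dup_radicand x))"
    unfolding dup_pow6_minus_one[OF P] using W P by (simp add: real_sqrt_mult real_sqrt_divide)
  moreover have "0 < sqrt (x^6 - 1)"
    using \<open>1 < x\<close> by simp
  ultimately show ?thesis
    using W P by (simp add: leaf_integrand_def)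
qed

lemma leaf_integral_dup:
  assumes integrable: "leaf_integrand 3 integrable_on {1..}"
    and "1 \<le> c" and P: "0 < dup_radicand c"
  shows "leaf_integral 3 (dup c) = 2 * leaf_integral 3 c"
proof -
  have P_pos: "0 < dup_radicand x" if "1 \<le> x" "x \<le> c" for x
    using dup_radicand_strict_antimono[of x c] that P by (cases "x = c") auto
  have dup_cont: "continuous_on {1..c} dup"
    using P_pos has_real_derivative_dup
    by (intro continuous_at_imp_continuous_on ballI DERIV_isCont) force
  have "{1..c} \<noteq> {}"
    using \<open>1 \<le> c\<close> by simp
  then obtain m where "\<forall>x\<in>{1..c}. dup x \<le> dup m"
    using continuous_attains_sup[OF compact_Icc _ dup_cont] by blast
  then have "dup ` {1..c} \<subseteq> {1..dup m}"
    using P_pos dup_ge_one by auto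
  then have "continuous_on {1..c} (\<lambda>x. leaf_integral 3 (dup x) - 2 * leaf_integral 3 x)"
    using integrable
    by (intro continuous_intros continuous_on_compose2[OF continuous_on_leaf_integral dup_cont]
        continuous_on_subset[OF continuous_on_leaf_integral[of 3 c]]) auto
  moreover have "((\<lambda>x. leaf_integral 3 (dup x) - 2 * leaf_integral 3 x) has_real_derivative 0) (at x)"
    if "1 < x" "x < c" for x
  proof -
    have "((\<lambda>x. leaf_integral 3 (dup x) - 2 * leaf_integral 3 x) has_real_derivative
        leaf_integrand 3 (dup x) * (dup_deriv_numer x / (dup_radicand x * sqrt (dup_radicand x)))
          - 2 * leaf_integrand 3 x) (at x)"
      using that P_pos[of x] dup_gt_one[of x] integrable
      by (intro DERIV_diff DERIV_cmult DERIV_chain2[where f = "leaf_integral 3"]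
          leaf_integral_has_derivative has_real_derivative_dup) auto
    then show ?thesis
      using leaf_integrand_dup[of x] that P_pos[of x] by simp
  qed
  ultimately have "leaf_integral 3 (dup c) - 2 * leaf_integral 3 c
      = leaf_integral 3 (dup 1) - 2 * leaf_integral 3 1"
    using \<open>1 \<le> c\<close> by (cases "c = 1") (auto intro: DERIV_isconst2[of 1 c])
  then show ?thesis
    by (simp add: dup_one leaf_integral_def)
qed

lemma dup_surj:
  assumes "1 \<le> r"
  obtains c where "1 \<le> c" "0 < dup_radicand c" "dup c = r"
proof -
  define h where "h x = (dup_numer x)^2 - r^2 * dup_radicand x" for x
  have "1 \<le> r^2"
    using assms by (simp add: one_le_power)
  \<comment> \<open>dup_radicand 2 < 0\<close>
  then have "h 1 \<le> 0" "0 \<le> h 2"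
    by (simp_all add: h_def dup_numer_def dup_radicand_def)
  moreover have "continuous_on {1..2} h"
    unfolding h_def dup_numer_def dup_radicand_def by (intro continuous_intros)
  ultimately obtain c where c: "1 \<le> c" "h c = 0"
    using IVT'[of h 1 0 2] by auto
  have "1 \<le> c^2" "1 \<le> c^4"
    using c(1) by (simp_all add: one_le_power)
  then have "3 \<le> dup_numer c"
    by (simp add: dup_numer_def)
  moreover have "dup_radicand c = (dup_numer c / r)^2"
    using c(2) assms by (simp add: h_def power_divide)
  ultimately have "0 < dup_radicand c" "sqrt (dup_radicand c) = dup_numer c / r"
    using assms by simp_all
  then show ?thesis
    using that[OF c(1)] \<open>3 \<le> dup_numer c\<close> assms by (simp add: dup_def)
qed

theorem mainTheorem11:
  fixes l :: real
  assumes "- eta 3 < 2 * l" and "2 * l < eta 3"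
  shows "cleafh 3 (2 * l) =
    (2 * (cleafh 3 l)^2 + 2 * (cleafh 3 l)^4 - 1) /
    sqrt (1 + 8 * (cleafh 3 l)^2 + 8 * (cleafh 3 l)^6 - 8 * (cleafh 3 l)^8)"
proof (cases "leaf_integrand 3 integrable_on {1..}")
  case False
  \<comment> \<open>The integrand is integrable, but if it were not, the junk value eta 3 = 0 would make
    the hypotheses contradictory.\<close>
  then have "eta 3 = 0"
    by (simp add: eta_def not_integrable_integral)
  with assms show ?thesis by simp
next
  case integrable: True
  have "\<bar>2 * l\<bar> < eta 3"
    using assms by linarith
  then obtain r where r: "1 \<le> r" "leaf_integral 3 r = \<bar>2 * l\<bar>"
    using leaf_integral_surj[OF integrable abs_ge_zero] by blast
  obtain c where c: "1 \<le> c" "0 < dup_radicand c" "dup c = r"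
    using dup_surj[OF r(1)] .
  have "leaf_integral 3 c = \<bar>l\<bar>"
    using leaf_integral_dup[OF integrable c(1,2)] c(3) r(2) by simp
  then have "cleafh 3 l = c"
    using cleafh_eqI[OF integrable _ c(1)] by simp
  moreover have "cleafh 3 (2 * l) = dup c"
    using cleafh_eqI[OF integrable _ r(1)] r(2) c(3) by simp
  ultimately show ?thesis
    by (simp add: dup_def dup_numer_def dup_radicand_def)
qed

end
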